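(* Let $R$ be a commutative Noetherian ring with unity such that $\Gamma_E(R)$ is finite and has more than two vertices. Then $\Gamma_E(R)$ is not a regular graph.
   Context: For $x,y\in R$ write $x\sim y$ iff $\operatorname{ann}(x)=\operatorname{ann}(y)$; $[x]$ denotes the equivalence class of $x$. Let $Z^*(R)$ be the set of nonzero zero divisors of $R$. The graph $\Gamma_E(R)$ is the simple graph whose vertices are the classes $[x]$ with $x\in Z^*(R)$, two distinct vertices $[x],[y]$ being adjacent iff $xy=0$. A graph is regular if all its vertices have the same degree. *)

theory Defs
  imports Main
begin

definition is_ideal :: "'a::comm_ring_1 set \<Rightarrow> bool" where
  "is_ideal I \<longleftrightarrow> 0 \<in> I \<and> (\<forall>x\<in>I. \<forall>y\<in>I. x + y \<in> I) \<and> (\<forall>x\<in>I. - x \<in> I)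
     \<and> (\<forall>r x. x \<in> I \<longrightarrow> r * x \<in> I)"

definition noetherian_ring :: "'a::comm_ring_1 itself \<Rightarrow> bool" where
  "noetherian_ring (t::'a itself) \<longleftrightarrow>
     (\<forall>I :: nat \<Rightarrow> 'a set. (\<forall>n. is_ideal (I n)) \<and> (\<forall>n. I n \<subseteq> I (Suc n))
        \<longrightarrow> (\<exists>N. \<forall>n\<ge>N. I n = I N))"

definition ann :: "'a::comm_ring_1 \<Rightarrow> 'a set" where
  "ann x = {y. x * y = 0}"

definition zdiv_star :: "'a::comm_ring_1 set" where
  "zdiv_star = {x. x \<noteq> 0 \<and> (\<exists>y. y \<noteq> 0 \<and> x * y = 0)}"

definition eclass :: "'a::comm_ring_1 \<Rightarrow> 'a set" where
  "eclass x = {y. ann y = ann x}"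

definition GE_vertices :: "'a::comm_ring_1 set set" where
  "GE_vertices = eclass ` zdiv_star"

definition GE_adj :: "'a::comm_ring_1 set \<Rightarrow> 'a set \<Rightarrow> bool" where
  "GE_adj v w \<longleftrightarrow> v \<in> GE_vertices \<and> w \<in> GE_vertices \<and> v \<noteq> w \<and>
     (\<exists>x y. x \<in> zdiv_star \<and> y \<in> zdiv_star \<and> v = eclass x \<and> w = eclass y \<and> x * y = 0)"

definition GE_degree :: "'a::comm_ring_1 set \<Rightarrow> nat" where
  "GE_degree v = card {w \<in> GE_vertices. GE_adj v w}"

definition GE_regular :: "'a::comm_ring_1 itself \<Rightarrow> bool" where
  "GE_regular (t::'a itself) \<longleftrightarrow> (\<forall>v \<in> (GE_vertices :: 'a set set). \<forall>w \<in> (GE_vertices :: 'a set set). GE_degree v = GE_degree w)"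

end

theory Submission
  imports Defs
begin

text \<open>Choose a zero divisor \<open>x\<close> whose annihilator is maximal among annihilators of zero divisors;
  \<open>ann x\<close> is then a prime ideal. If some vertex \<open>[z]\<close> with \<open>z \<notin> ann x\<close> differs from \<open>[x]\<close>, then
  \<open>ann z \<subset> ann x\<close> and the neighbourhood of \<open>[z]\<close> is strictly contained in that of \<open>[x]\<close>, so the graph
  is not regular. Otherwise \<open>[x]\<close> is adjacent to every other vertex, so a regular graph would be
  complete; but in a complete compressed graph two distinct vertices with \<open>z\<^sup>2 = 0\<close> cannot coexist,
  and any vertex with \<open>y\<^sup>2 \<noteq> 0\<close> forces all others to have \<open>z\<^sup>2 = 0\<close>, leaving at most two vertices.\<close>

definition GE_nbhd :: "'a::comm_ring_1 set \<Rightarrow> 'a set set" where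
  "GE_nbhd v = {w \<in> GE_vertices. GE_adj v w}"

definition maximal_annihilator :: "'a::comm_ring_1 \<Rightarrow> bool" where
  "maximal_annihilator x \<longleftrightarrow>
     x \<in> zdiv_star \<and> (\<forall>a \<in> zdiv_star. ann x \<subseteq> ann a \<longrightarrow> ann a = ann x)"

lemma mem_ann_iff [simp]: "y \<in> ann x \<longleftrightarrow> x * y = 0"
  by (simp add: ann_def)

lemma mem_zdiv_star_iff: "x \<in> zdiv_star \<longleftrightarrow> x \<noteq> 0 \<and> (\<exists>y. y \<noteq> 0 \<and> x * y = 0)"
  by (simp add: zdiv_star_def)

lemma zdiv_starI: "x \<noteq> 0 \<Longrightarrow> y \<noteq> 0 \<Longrightarrow> x * y = 0 \<Longrightarrow> x \<in> zdiv_star"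
  by (auto simp: mem_zdiv_star_iff)

lemma eclass_eq_iff: "eclass a = eclass b \<longleftrightarrow> ann a = ann b"
  unfolding eclass_def by auto

lemma eclass_in_GE_vertices: "a \<in> zdiv_star \<Longrightarrow> eclass a \<in> GE_vertices"
  by (simp add: GE_vertices_def)

lemma GE_degree_eq_card_nbhd: "GE_degree v = card (GE_nbhd v)"
  by (simp add: GE_degree_def GE_nbhd_def)

lemma GE_nbhd_subset: "GE_nbhd v \<subseteq> GE_vertices - {v}"
  unfolding GE_nbhd_def GE_adj_def by auto

lemma GE_adj_eclass_iff:
  assumes "a \<in> zdiv_star" "b \<in> zdiv_star"
  shows "GE_adj (eclass a) (eclass b) \<longleftrightarrow> ann a \<noteq> ann b \<and> a * b = 0"
proof
  assume "GE_adj (eclass a) (eclass b)"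
  then obtain x y where "ann a = ann x" "ann b = ann y" "x * y = 0" "ann a \<noteq> ann b"
    unfolding GE_adj_def eclass_eq_iff by blast
  then have "b * a = 0"
    by (metis mem_ann_iff mult.commute)
  with \<open>ann a \<noteq> ann b\<close> show "ann a \<noteq> ann b \<and> a * b = 0"
    by (simp add: mult.commute)
next
  assume "ann a \<noteq> ann b \<and> a * b = 0"
  then show "GE_adj (eclass a) (eclass b)"
    unfolding GE_adj_def eclass_eq_iff using assms eclass_in_GE_vertices by blast
qed

lemma eclass_in_GE_nbhd_iff:
  assumes "a \<in> zdiv_star" "b \<in> zdiv_star"
  shows "eclass b \<in> GE_nbhd (eclass a) \<longleftrightarrow> ann a \<noteq> ann b \<and> a * b = 0"
  using assms by (simp add: GE_nbhd_def GE_adj_eclass_iff eclass_in_GE_vertices)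

lemma GE_nbhd_eclass_subset:
  assumes "a \<in> zdiv_star" "b \<in> zdiv_star" "ann a \<subseteq> ann b" "a * b \<noteq> 0"
  shows "GE_nbhd (eclass a) \<subseteq> GE_nbhd (eclass b)"
proof
  fix v assume v: "v \<in> GE_nbhd (eclass a)"
  then obtain c where c: "c \<in> zdiv_star" "v = eclass c"
    using GE_nbhd_subset unfolding GE_vertices_def by blast
  with v assms(1) have "a * c = 0"
    by (simp add: eclass_in_GE_nbhd_iff)
  with assms(3) have "b * c = 0"
    by auto
  moreover have "ann b \<noteq> ann c"
    using \<open>a * c = 0\<close> assms(4) by (metis mem_ann_iff mult.commute)
  ultimately show "v \<in> GE_nbhd (eclass b)"
    using assms(2) c by (simp add: eclass_in_GE_nbhd_iff)
qed

lemma finite_ann_image_zdiv_star: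
  assumes "finite (GE_vertices :: 'a::comm_ring_1 set set)"
  shows "finite (ann ` (zdiv_star :: 'a set))"
proof -
  define g :: "'a set \<Rightarrow> 'a set" where "g v = {y. \<forall>w\<in>v. w * y = 0}" for v
  have "ann a = g (eclass a)" for a :: 'a
    unfolding g_def eclass_def ann_def by auto
  then have "ann ` (zdiv_star :: 'a set) = g ` GE_vertices"
    unfolding GE_vertices_def by (auto simp: image_image)
  with assms show ?thesis
    by simp
qed

lemma ex_maximal_annihilator:
  assumes "finite (GE_vertices :: 'a::comm_ring_1 set set)" "(zdiv_star :: 'a set) \<noteq> {}"
  obtains x where "maximal_annihilator (x :: 'a)"
proof -
  have "ann ` (zdiv_star :: 'a set) \<noteq> {}"
    using assms(2) by blast
  then obtain m where m: "m \<in> ann ` (zdiv_star :: 'a set)"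
    and m_max: "\<And>b. b \<in> ann ` zdiv_star \<Longrightarrow> m \<subseteq> b \<Longrightarrow> m = b"
    using finite_has_maximal[OF finite_ann_image_zdiv_star[OF assms(1)]] by metis
  then obtain x :: 'a where "x \<in> zdiv_star" "m = ann x"
    by blast
  with m_max have "maximal_annihilator x"
    unfolding maximal_annihilator_def by blast
  then show ?thesis
    by (rule that)
qed

lemma maximal_annihilator_prime:
  assumes "maximal_annihilator x" "a * b \<in> ann x" "a \<notin> ann x"
  shows "b \<in> ann x"
proof -
  obtain y where "y \<noteq> 0" "x * y = 0"
    using assms(1) by (auto simp: maximal_annihilator_def mem_zdiv_star_iff)
  have "a * x \<noteq> 0"
    using assms(3) by (simp add: mult.commute)
  moreover note \<open>y \<noteq> 0\<close>
  moreover have "a * x * y = 0"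
    using \<open>x * y = 0\<close> by (simp add: mult.assoc)
  ultimately have "a * x \<in> zdiv_star"
    by (rule zdiv_starI)
  moreover have "ann x \<subseteq> ann (a * x)"
    by (auto simp: mult.assoc)
  ultimately have "ann (a * x) = ann x"
    using assms(1) by (auto simp: maximal_annihilator_def)
  moreover have "a * x * b = 0"
    using assms(2) by (simp add: mult.commute mult.left_commute)
  ultimately show ?thesis
    by (metis mem_ann_iff)
qed

lemma ann_subset_maximal_annihilator:
  assumes "maximal_annihilator x" "z \<notin> ann x"
  shows "ann z \<subseteq> ann x"
  using maximal_annihilator_prime[OF assms(1) _ assms(2)] by auto

text \<open>If every \<open>p \<in> ann x - ann z\<close> had \<open>ann p = ann x\<close>, then for \<open>0 \<noteq> w \<in> ann z\<close> both \<open>p\<close> and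
  \<open>p + w\<close> would kill \<open>ann x\<close>, hence so would \<open>w\<close>, and maximality would put \<open>z\<close> into \<open>ann w = ann x\<close>.\<close>

lemma ex_neighbour_not_shared:
  assumes x: "maximal_annihilator x"
    and z: "z \<in> zdiv_star" "z \<notin> ann x" "ann z \<noteq> ann x"
  shows "\<exists>p \<in> ann x. p \<notin> ann z \<and> ann p \<noteq> ann x"
proof (rule ccontr)
  assume "\<not> ?thesis"
  then have ann_eq: "ann q = ann x" if "q \<in> ann x" "q \<notin> ann z" for q
    using that by blast
  have sub: "ann z \<subseteq> ann x"
    using ann_subset_maximal_annihilator[OF x z(2)] .
  then obtain p where p: "p \<in> ann x" "p \<notin> ann z"
    using z(3) by blast
  obtain w where w: "w \<noteq> 0" "z * w = 0"
    using z(1) by (auto simp: mem_zdiv_star_iff)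
  have "w \<in> ann x"
    using w(2) sub by auto
  have "p + w \<in> ann x" "p + w \<notin> ann z"
    using p \<open>w \<in> ann x\<close> w(2) by (auto simp: distrib_left)
  then have ann_pw: "ann (p + w) = ann x"
    by (rule ann_eq)
  have "ann x \<subseteq> ann w"
  proof
    fix q assume "q \<in> ann x"
    then have "(p + w) * q = 0" "p * q = 0"
      using ann_pw ann_eq[OF p] by (metis mem_ann_iff)+
    then show "q \<in> ann w"
      by (simp add: distrib_right)
  qed
  moreover have "w \<in> zdiv_star"
    using w z(1) zdiv_starI[of w z] by (auto simp: mem_zdiv_star_iff mult.commute)
  ultimately have "ann w = ann x"
    using x by (auto simp: maximal_annihilator_def)
  then show False
    using w(2) z(2) by (metis mem_ann_iff mult.commute)
qed

lemma GE_degree_less_maximal_annihilator: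
  assumes fin: "finite (GE_vertices :: 'a::comm_ring_1 set set)"
    and x: "maximal_annihilator (x :: 'a)"
    and z: "z \<in> zdiv_star" "z \<notin> ann x" "ann z \<noteq> ann x"
  shows "GE_degree (eclass z) < GE_degree (eclass x)"
proof -
  have xZ: "x \<in> zdiv_star"
    using x by (simp add: maximal_annihilator_def)
  obtain p where p: "p \<in> ann x" "p \<notin> ann z" "ann p \<noteq> ann x"
    using ex_neighbour_not_shared[OF x z] by blast
  have "p \<noteq> 0"
    using p(2) by auto
  moreover have "x \<noteq> 0" "p * x = 0"
    using xZ p(1) by (auto simp: mem_zdiv_star_iff mult.commute)
  ultimately have pZ: "p \<in> zdiv_star"
    by (blast intro: zdiv_starI)
  have "GE_nbhd (eclass z) \<subseteq> GE_nbhd (eclass x)"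
    using GE_nbhd_eclass_subset[OF z(1) xZ ann_subset_maximal_annihilator[OF x z(2)]] z(2)
    by (simp add: mult.commute)
  moreover have "eclass p \<in> GE_nbhd (eclass x)" "eclass p \<notin> GE_nbhd (eclass z)"
    using p pZ xZ z(1) by (simp_all add: eclass_in_GE_nbhd_iff)
  ultimately have "GE_nbhd (eclass z) \<subset> GE_nbhd (eclass x)"
    by blast
  moreover have "finite (GE_nbhd (eclass x))"
    using fin GE_nbhd_subset finite_subset by blast
  ultimately show ?thesis
    by (simp add: GE_degree_eq_card_nbhd psubset_card_mono)
qed

definition GE_complete :: "'a::comm_ring_1 itself \<Rightarrow> bool" where
  "GE_complete (t::'a itself) \<longleftrightarrow>
     (\<forall>a \<in> (zdiv_star :: 'a set). \<forall>b \<in> zdiv_star. ann a \<noteq> ann b \<longrightarrow> a * b = 0)"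

lemma GE_completeD:
  "GE_complete TYPE('a) \<Longrightarrow> a \<in> zdiv_star \<Longrightarrow> b \<in> zdiv_star \<Longrightarrow> ann a \<noteq> ann b
    \<Longrightarrow> a * b = (0::'a::comm_ring_1)"
  by (simp add: GE_complete_def)

lemma GE_complete_if_nbhd_eq:
  assumes "\<And>v. v \<in> (GE_vertices :: 'a::comm_ring_1 set set) \<Longrightarrow> GE_nbhd v = GE_vertices - {v}"
  shows "GE_complete TYPE('a)"
  unfolding GE_complete_def
proof (intro ballI impI)
  fix a b :: 'a
  assume ab: "a \<in> zdiv_star" "b \<in> zdiv_star" "ann a \<noteq> ann b"
  then have "eclass b \<in> GE_nbhd (eclass a)"
    using assms[OF eclass_in_GE_vertices[OF ab(1)]] eclass_in_GE_vertices[OF ab(2)]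
    by (simp add: eclass_eq_iff)
  with ab show "a * b = 0"
    by (simp add: eclass_in_GE_nbhd_iff)
qed

lemma GE_nbhd_eq_of_dominating:
  assumes "x \<in> zdiv_star" and dom: "\<And>b. b \<in> zdiv_star \<Longrightarrow> ann b \<noteq> ann x \<Longrightarrow> x * b = 0"
  shows "GE_nbhd (eclass x) = GE_vertices - {eclass x}"
proof
  show "GE_nbhd (eclass x) \<subseteq> GE_vertices - {eclass x}"
    by (rule GE_nbhd_subset)
  show "GE_vertices - {eclass x} \<subseteq> GE_nbhd (eclass x)"
  proof
    fix v assume "v \<in> GE_vertices - {eclass x}"
    then obtain b where "b \<in> zdiv_star" "v = eclass b" "ann b \<noteq> ann x"
      unfolding GE_vertices_def using eclass_eq_iff by blast
    moreover from this have "x * b = 0"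
      using dom by blast
    ultimately show "v \<in> GE_nbhd (eclass x)"
      using eclass_in_GE_nbhd_iff[OF assms(1)] by auto
  qed
qed

lemma GE_regular_nbhd_eq:
  assumes reg: "GE_regular TYPE('a::comm_ring_1)" and fin: "finite (GE_vertices :: 'a set set)"
    and v: "(v :: 'a set) \<in> GE_vertices" "GE_nbhd v = GE_vertices - {v}"
    and w: "(w :: 'a set) \<in> GE_vertices"
  shows "GE_nbhd w = GE_vertices - {w}"
proof (rule card_subset_eq)
  show "finite (GE_vertices - {w})"
    using fin by blast
  show "GE_nbhd w \<subseteq> GE_vertices - {w}"
    by (rule GE_nbhd_subset)
  have "GE_degree w = GE_degree v"
    using reg v(1) w unfolding GE_regular_def by blast
  then have "card (GE_nbhd w) = card (GE_nbhd v)"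
    by (simp add: GE_degree_eq_card_nbhd)
  also have "\<dots> = card (GE_vertices - {v})"
    using v(2) by simp
  also have "\<dots> = card (GE_vertices - {w})"
    using fin v(1) w by (simp add: card_Diff_singleton)
  finally show "card (GE_nbhd w) = card (GE_vertices - {w})" .
qed

lemma square_zero_ann_eq:
  fixes a b :: "'a::comm_ring_1"
  assumes "GE_complete TYPE('a)"
    and "a \<in> zdiv_star" "b \<in> zdiv_star" "a * a = 0" "b * b = 0"
  shows "ann a = ann b"
proof -
  have ann_subset: "ann d \<subseteq> ann e"
    if "d \<in> zdiv_star" "e \<in> zdiv_star" "e * e = 0" for d e :: 'a
  proof
    fix c assume "c \<in> ann d"
    consider "c = 0" | "ann c = ann e" | "c \<noteq> 0" "ann c \<noteq> ann e"
      by blast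
    then show "c \<in> ann e"
    proof cases
      case 2
      with \<open>e * e = 0\<close> have "c * e = 0"
        using mem_ann_iff by blast
      then show ?thesis
        by (simp add: mult.commute)
    next
      case 3
      have "d \<noteq> 0" "c * d = 0"
        using that(1) \<open>c \<in> ann d\<close> by (auto simp: mem_zdiv_star_iff mult.commute)
      with 3 have "c \<in> zdiv_star"
        by (blast intro: zdiv_starI)
      with 3 that(2) show ?thesis
        using GE_completeD[OF assms(1)] by auto
    qed simp
  qed
  show ?thesis
    using ann_subset[OF assms(2,3,5)] ann_subset[OF assms(3,2,4)] by (rule subset_antisym)
qed

text \<open>The witness is \<open>y + w\<close>: it kills \<open>u\<close>, but not \<open>y\<close>, so completeness forces \<open>ann (y + w) = ann y\<close>.\<close>

lemma square_zero_of_square_nonzero: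
  fixes y w u :: "'a::comm_ring_1"
  assumes "GE_complete TYPE('a)"
    and Z: "y \<in> zdiv_star" "w \<in> zdiv_star" "u \<in> zdiv_star"
    and "y * y \<noteq> 0" "ann y \<noteq> ann w" "ann y \<noteq> ann u" "ann w \<noteq> ann u"
  shows "w * w = 0"
proof -
  note ne = \<open>ann y \<noteq> ann w\<close> \<open>ann y \<noteq> ann u\<close> \<open>ann w \<noteq> ann u\<close>
  have yw: "y * w = 0" and yu: "y * u = 0" and wu: "w * u = 0"
    using GE_completeD[OF assms(1) Z(1,2) ne(1)] GE_completeD[OF assms(1) Z(1,3) ne(2)]
      GE_completeD[OF assms(1) Z(2,3) ne(3)] .
  have "y + w \<noteq> 0"
  proof
    assume "y + w = 0"
    then have "w = - y"
      by (simp add: add_eq_0_iff)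
    then have "ann w = ann y"
      by (simp add: ann_def)
    with \<open>ann y \<noteq> ann w\<close> show False
      by simp
  qed
  moreover have "u \<noteq> 0"
    using Z(3) by (simp add: mem_zdiv_star_iff)
  moreover have "(y + w) * u = 0"
    using yu wu by (simp add: distrib_right)
  ultimately have "y + w \<in> zdiv_star"
    by (rule zdiv_starI)
  moreover have "y * (y + w) \<noteq> 0"
    using yw \<open>y * y \<noteq> 0\<close> by (simp add: distrib_left)
  ultimately have "ann (y + w) = ann y"
    using GE_completeD[OF assms(1) Z(1)] by metis
  then have "(y + w) * w = 0"
    using yw by (metis mem_ann_iff)
  with yw show ?thesis
    by (simp add: distrib_right)
qed

lemma two_less_card_obtains:
  assumes "2 < card A"
  obtains a b c where "a \<in> A" "b \<in> A" "c \<in> A" "a \<noteq> b" "a \<noteq> c" "b \<noteq> c"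
proof -
  have "finite A"
    using assms card.infinite by fastforce
  obtain a where "a \<in> A"
    using assms by fastforce
  with assms \<open>finite A\<close> have "2 \<le> card (A - {a})"
    by simp
  then obtain b where "b \<in> A - {a}"
    by (metis all_not_in_conv card.empty not_numeral_le_zero)
  with \<open>2 \<le> card (A - {a})\<close> \<open>finite A\<close> have "1 \<le> card (A - {a} - {b})"
    by simp
  then obtain c where "c \<in> A - {a} - {b}"
    by (metis all_not_in_conv card.empty not_one_le_zero)
  with \<open>a \<in> A\<close> \<open>b \<in> A - {a}\<close> show ?thesis
    using that by blast
qed

lemma GE_complete_card_le_2:
  assumes "GE_complete TYPE('a::comm_ring_1)"
  shows "card (GE_vertices :: 'a set set) \<le> 2"
proof (rule ccontr)
  assume "\<not> ?thesis"
  then obtain u v w :: "'a set" where "u \<in> GE_vertices" "v \<in> GE_vertices" "w \<in> GE_vertices"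
    and "u \<noteq> v" "u \<noteq> w" "v \<noteq> w"
    by (meson not_le two_less_card_obtains)
  then obtain a b c :: 'a where Z: "a \<in> zdiv_star" "b \<in> zdiv_star" "c \<in> zdiv_star"
    and "eclass a \<noteq> eclass b" "eclass a \<noteq> eclass c" "eclass b \<noteq> eclass c"
    unfolding GE_vertices_def by (metis imageE)
  then have ne: "ann a \<noteq> ann b" "ann a \<noteq> ann c" "ann b \<noteq> ann c"
    by (simp_all add: eclass_eq_iff)
  note sq_eq = square_zero_ann_eq[OF assms]
  note sq_zero = square_zero_of_square_nonzero[OF assms]
  show False
  proof (cases "a * a = 0")
    case True
    then show False
      using sq_eq[OF Z(1,2)] sq_eq[OF Z(1,3)] sq_zero[OF Z(2,3,1)] ne by metis
  next
    case False
    then show False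
      using sq_eq[OF Z(2,3)] sq_zero[OF Z(1,2,3)] sq_zero[OF Z(1,3,2)] ne by metis
  qed
qed

theorem proposition1p10:
  assumes "noetherian_ring TYPE('a::comm_ring_1)"
    and "finite (GE_vertices :: 'a set set)"
    and "card (GE_vertices :: 'a set set) > 2"
  shows "\<not> GE_regular TYPE('a)"
proof
  assume reg: "GE_regular TYPE('a)"
  have "(zdiv_star :: 'a set) \<noteq> {}"
    using assms(3) by (auto simp: GE_vertices_def)
  then obtain x :: 'a where x: "maximal_annihilator x"
    using ex_maximal_annihilator assms(2) by blast
  then have xZ: "x \<in> zdiv_star"
    by (simp add: maximal_annihilator_def)
  show False
  proof (cases "\<exists>z \<in> zdiv_star. z \<notin> ann x \<and> ann z \<noteq> ann x")
    case True
    then obtain z where "z \<in> zdiv_star" "z \<notin> ann x" "ann z \<noteq> ann x"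
      by blast
    with reg xZ show False
      using GE_degree_less_maximal_annihilator[OF assms(2) x]
      by (metis GE_regular_def eclass_in_GE_vertices less_irrefl)
  next
    case False
    then have "GE_nbhd (eclass x) = GE_vertices - {eclass x}"
      by (intro GE_nbhd_eq_of_dominating xZ) auto
    then have "GE_complete TYPE('a)"
      using GE_regular_nbhd_eq[OF reg assms(2) eclass_in_GE_vertices[OF xZ]]
      by (intro GE_complete_if_nbhd_eq)
    with assms(3) show False
      using GE_complete_card_le_2 by fastforce
  qed
qed

end
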